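(* Let $n_*>2$ be an integer, $\phi(b)=\upsilon\log b\,[\log\log b]^{1+\varepsilon}$ ($b\ge n_*+1$) with $\upsilon,\varepsilon>0$ such that $\phi(n_*+1)>1$, and $\mathsf{G}\in\mathbb{G}(n_*,\phi)$. Then for every $\theta>0$ there exists $a>0$ (possibly depending on $\theta,n_*,\upsilon,\varepsilon$) such that for every $x\in\mathsf{V}$ there exists $N_x\in\mathbb{N}$ with $$G_\theta(N,x):=\sum_{y\in\mathsf{S}(N,x)}[n(y)]^{1+\theta}\le\exp(aN)\quad\text{for all } N\ge N_x,$$ where $\mathsf{S}(N,x)=\{y\in\mathsf{V}:\rho(x,y)=N\}$.
   Context: $\mathsf{G}=(\mathsf{V},\mathsf{E})$ is a countable, connected, locally finite undirected graph; $n(x)$ is the degree, $\rho$ the path distance. For integer $n_*>2$, $\mathsf{V}_*=\{x:n(x)\le n_*\}$, $\mathsf{V}_*^c=\mathsf{V}\setminus\mathsf{V}_*$. For strictly increasing $\phi:(n_*,+\infty)\to(0,+\infty)$, $\mathbb{G}(n_*,\phi)$ is the family of graphs with $\rho(x,y)\ge\phi[\max\{n(x),n(y)\}]$ for all $x,y\in\mathsf{V}_*^c$. *)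

theory Defs
  imports "HOL-Analysis.Analysis"
begin

definition graph_ok :: "'v set \<Rightarrow> ('v \<Rightarrow> 'v \<Rightarrow> bool) \<Rightarrow> bool" where
  "graph_ok V E \<longleftrightarrow>
     countable V \<and>
     (\<forall>x y. E x y \<longrightarrow> x \<in> V \<and> y \<in> V) \<and>
     (\<forall>x y. E x y \<longrightarrow> E y x) \<and>
     (\<forall>x. \<not> E x x) \<and>
     (\<forall>x\<in>V. finite {y. E x y}) \<and>
     (\<forall>x\<in>V. \<forall>y\<in>V. E\<^sup>*\<^sup>* x y)"

definition deg :: "('v \<Rightarrow> 'v \<Rightarrow> bool) \<Rightarrow> 'v \<Rightarrow> nat" where
  "deg E x = card {y. E x y}"

definition gdist :: "('v \<Rightarrow> 'v \<Rightarrow> bool) \<Rightarrow> 'v \<Rightarrow> 'v \<Rightarrow> nat" where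
  "gdist E x y = (LEAST n. (E ^^ n) x y)"

definition sphere :: "'v set \<Rightarrow> ('v \<Rightarrow> 'v \<Rightarrow> bool) \<Rightarrow> nat \<Rightarrow> 'v \<Rightarrow> 'v set" where
  "sphere V E N x = {y \<in> V. gdist E x y = N}"

definition in_family :: "'v set \<Rightarrow> ('v \<Rightarrow> 'v \<Rightarrow> bool) \<Rightarrow> nat \<Rightarrow> (real \<Rightarrow> real) \<Rightarrow> bool" where
  "in_family V E nstar \<phi> \<longleftrightarrow> graph_ok V E \<and>
     (\<forall>x\<in>V. \<forall>y\<in>V. x \<noteq> y \<and> deg E x > nstar \<and> deg E y > nstar \<longrightarrow>
        real (gdist E x y) \<ge> \<phi> (real (max (deg E x) (deg E y))))"

end

theory Submission
  imports Defs
begin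

text \<open>Follow breadth-first-search parents from a vertex y of the sphere S(N,x) back to x, and let
  P(y) be the product of the degrees of the strict ancestors of y. Splitting a unit mass at x evenly
  among the children at every level shows that the weights 1/P(y), y in S(N,x), sum to at most 1.
  The growth condition \<open>\<phi>(b) \<ge> \<kappa> ln b\<close> forces distinct high-degree vertices v, w to satisfy
  \<open>n(v) \<le> exp (\<rho>(w,v) / \<kappa>)\<close>, so along the ancestor chain the degrees of successive high-degree
  vertices telescope and \<open>n(y) P(y) \<le> B = n\<^sub>* ^ (N+1) exp (K + N / \<kappa>)\<close>. Consequently every
  n(y) is at most B, their sum is at most B, and the sum of the \<open>n(y) ^ (1+\<theta>)\<close> is at most
  \<open>B ^ (1+\<theta>)\<close>, which is exponential in N.\<close>

lemma gdist_walk: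
  assumes "graph_ok V E" and "x \<in> V" "y \<in> V"
  shows "(E ^^ gdist E x y) x y"
proof -
  have "E\<^sup>*\<^sup>* x y" using assms unfolding graph_ok_def by blast
  then obtain n where "(E ^^ n) x y" using rtranclp_power by metis
  then show ?thesis unfolding gdist_def by (rule LeastI)
qed

lemma gdist_le_walk: "(E ^^ n) x y \<Longrightarrow> gdist E x y \<le> n"
  unfolding gdist_def by (rule Least_le)

lemma gdist_triangle:
  assumes "graph_ok V E" and "x \<in> V" "y \<in> V" "z \<in> V"
  shows "gdist E x z \<le> gdist E x y + gdist E y z"
  using assms by (metis gdist_le_walk gdist_walk relpowp_trans)

lemma sphere_0_subset: "graph_ok V E \<Longrightarrow> x \<in> V \<Longrightarrow> sphere V E 0 x \<subseteq> {x}"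
  unfolding sphere_def using gdist_walk by fastforce

lemma sphere_Suc_parent:
  assumes G: "graph_ok V E" and x: "x \<in> V" and y: "y \<in> sphere V E (Suc n) x"
  shows "\<exists>z \<in> sphere V E n x. E z y"
proof -
  have yV: "y \<in> V" and gy: "gdist E x y = Suc n" using y unfolding sphere_def by auto
  have "(E ^^ Suc n) x y" using gdist_walk[OF G x yV] gy by simp
  then obtain z where z: "(E ^^ n) x z" "E z y" by (rule relpowp_Suc_E)
  have zV: "z \<in> V" using z(2) G unfolding graph_ok_def by blast
  have "gdist E x y \<le> Suc (gdist E x z)"
    by (rule gdist_le_walk[OF relpowp_Suc_I[OF gdist_walk[OF G x zV] z(2)]])
  with gdist_le_walk[OF z(1)] gy have "gdist E x z = n" by simp
  with z zV show ?thesis unfolding sphere_def by blast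
qed

lemma finite_sphere:
  assumes G: "graph_ok V E" and x: "x \<in> V"
  shows "finite (sphere V E n x)"
proof (induction n)
  case 0
  then show ?case using finite_subset[OF sphere_0_subset[OF G x]] by blast
next
  case (Suc n)
  have "sphere V E (Suc n) x \<subseteq> (\<Union>z\<in>sphere V E n x. {y. E z y})"
    using sphere_Suc_parent[OF G x] by blast
  moreover have "finite (\<Union>z\<in>sphere V E n x. {y. E z y})"
    using Suc G unfolding graph_ok_def sphere_def by auto
  ultimately show ?case using finite_subset by blast
qed

lemma deg_ge_1: "graph_ok V E \<Longrightarrow> E z y \<Longrightarrow> 1 \<le> deg E z"
  unfolding graph_ok_def deg_def
  by (metis (mono_tags, lifting) One_nat_def Suc_leI card_gt_0_iff empty_iff mem_Collect_eq)

definition bfs_parent :: "('v \<Rightarrow> 'v \<Rightarrow> bool) \<Rightarrow> 'v \<Rightarrow> 'v \<Rightarrow> 'v" where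
  "bfs_parent E x y = (SOME z. gdist E x z = gdist E x y - 1 \<and> E z y)"

lemma bfs_parent:
  assumes G: "graph_ok V E" and x: "x \<in> V" and y: "y \<in> sphere V E (Suc n) x"
  shows "bfs_parent E x y \<in> sphere V E n x" and "E (bfs_parent E x y) y"
proof -
  have "\<exists>z. gdist E x z = gdist E x y - 1 \<and> E z y"
    using sphere_Suc_parent[OF G x y] y unfolding sphere_def by auto
  then have "gdist E x (bfs_parent E x y) = gdist E x y - 1 \<and> E (bfs_parent E x y) y"
    unfolding bfs_parent_def by (rule someI_ex)
  with G y show "bfs_parent E x y \<in> sphere V E n x" and "E (bfs_parent E x y) y"
    unfolding sphere_def graph_ok_def by auto
qed

lemma bfs_ancestor:
  assumes G: "graph_ok V E" and x: "x \<in> V"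
  shows "y \<in> sphere V E n x \<Longrightarrow> k \<le> n \<Longrightarrow>
    (bfs_parent E x ^^ k) y \<in> sphere V E (n - k) x \<and> (E ^^ k) ((bfs_parent E x ^^ k) y) y"
proof (induction k arbitrary: n y)
  case 0
  then show ?case by simp
next
  case (Suc k)
  then obtain m where n: "n = Suc m" by (cases n) auto
  let ?z = "bfs_parent E x y"
  have z: "?z \<in> sphere V E m x" "E ?z y" using bfs_parent[OF G x] Suc.prems n by auto
  with Suc.IH[of ?z m] Suc.prems(2) n show ?case
    unfolding funpow_Suc_right comp_apply by (auto intro: relpowp_Suc_I)
qed

fun ancestor_deg_prod :: "('v \<Rightarrow> 'v \<Rightarrow> bool) \<Rightarrow> 'v \<Rightarrow> nat \<Rightarrow> 'v \<Rightarrow> real" where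
  "ancestor_deg_prod E x 0 y = 1"
| "ancestor_deg_prod E x (Suc n) y =
     real (deg E (bfs_parent E x y)) * ancestor_deg_prod E x n (bfs_parent E x y)"

lemma deg_mult_ancestor_deg_prod:
  "real (deg E y) * ancestor_deg_prod E x n y = (\<Prod>i\<le>n. real (deg E ((bfs_parent E x ^^ (n - i)) y)))"
proof (induction n arbitrary: y)
  case 0
  then show ?case by simp
next
  case (Suc n)
  have "(\<Prod>i\<le>n. real (deg E ((bfs_parent E x ^^ (Suc n - i)) y)))
      = (\<Prod>i\<le>n. real (deg E ((bfs_parent E x ^^ (n - i)) (bfs_parent E x y))))"
    by (intro prod.cong refl) (simp only: atMost_iff Suc_diff_le funpow_Suc_right comp_apply)
  with Suc.IH show ?case by (simp add: mult_ac)
qed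

lemma ancestor_deg_prod_ge_1:
  assumes G: "graph_ok V E" and x: "x \<in> V"
  shows "y \<in> sphere V E n x \<Longrightarrow> 1 \<le> ancestor_deg_prod E x n y"
proof (induction n arbitrary: y)
  case 0
  then show ?case by simp
next
  case (Suc n)
  then have "1 \<le> real (deg E (bfs_parent E x y))" "1 \<le> ancestor_deg_prod E x n (bfs_parent E x y)"
    using bfs_parent[OF G x Suc.prems] deg_ge_1[OF G] by auto
  then show ?case using mult_mono[of 1 _ 1] by fastforce
qed

lemma sum_inverse_ancestor_deg_prod_le_1:
  assumes G: "graph_ok V E" and x: "x \<in> V"
  shows "(\<Sum>y\<in>sphere V E n x. 1 / ancestor_deg_prod E x n y) \<le> 1"
proof (induction n)
  case 0
  have "sphere V E 0 x = {} \<or> sphere V E 0 x = {x}" using sphere_0_subset[OF G x] by blast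
  then show ?case by auto
next
  case (Suc n)
  let ?S = "sphere V E (Suc n) x" and ?T = "sphere V E n x" and ?p = "bfs_parent E x"
  let ?P = "ancestor_deg_prod E x n"
  have children: "card {y \<in> ?S. ?p y = z} \<le> deg E z" if "z \<in> V" for z
  proof -
    have "{y \<in> ?S. ?p y = z} \<subseteq> {y. E z y}" using bfs_parent(2)[OF G x] by blast
    then show ?thesis unfolding deg_def using G that by (intro card_mono) (auto simp: graph_ok_def)
  qed
  have "(\<Sum>y\<in>?S. 1 / ancestor_deg_prod E x (Suc n) y)
      = (\<Sum>z\<in>?p ` ?S. \<Sum>y\<in>{y \<in> ?S. ?p y = z}. 1 / (real (deg E (?p y)) * ?P (?p y)))"
    unfolding ancestor_deg_prod.simps by (rule sum.image_gen[OF finite_sphere[OF G x]])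
  also have "\<dots> = (\<Sum>z\<in>?p ` ?S. real (card {y \<in> ?S. ?p y = z}) / (real (deg E z) * ?P z))"
    by (intro sum.cong) auto
  also have "\<dots> \<le> (\<Sum>z\<in>?p ` ?S. 1 / ?P z)"
  proof (intro sum_mono)
    fix z assume "z \<in> ?p ` ?S"
    then obtain y where y: "y \<in> ?S" "z = ?p y" by blast
    then have zT: "z \<in> ?T" and "E z y" using bfs_parent[OF G x] by auto
    then have "1 \<le> real (deg E z)" "1 \<le> ?P z" "card {y \<in> ?S. ?p y = z} \<le> deg E z"
      using deg_ge_1[OF G] ancestor_deg_prod_ge_1[OF G x] children by (auto simp: sphere_def)
    then show "real (card {y \<in> ?S. ?p y = z}) / (real (deg E z) * ?P z) \<le> 1 / ?P z"
      by (simp add: divide_simps)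
  qed
  also have "\<dots> \<le> (\<Sum>z\<in>?T. 1 / ?P z)"
    using bfs_parent(1)[OF G x] ancestor_deg_prod_ge_1[OF G x]
    by (intro sum_mono2[OF finite_sphere[OF G x]]) (auto intro: order.trans[OF zero_le_one])
  finally show ?case using Suc.IH by linarith
qed

lemma prod_le_power_mult_telescoping:
  fixes d f :: "nat \<Rightarrow> real" and A :: real and H :: "nat set"
  assumes A: "1 \<le> A" and f: "mono f" "\<And>i. 1 \<le> f i"
    and d: "\<And>i. i \<le> n \<Longrightarrow> 0 \<le> d i"
    and unmarked: "\<And>i. i \<le> n \<Longrightarrow> i \<notin> H \<Longrightarrow> d i \<le> A"
    and marked: "\<And>i. i \<le> n \<Longrightarrow> i \<in> H \<Longrightarrow> d i \<le> f i"
    and marked_pair: "\<And>i j. j \<le> n \<Longrightarrow> i \<in> H \<Longrightarrow> j \<in> H \<Longrightarrow> i < j \<Longrightarrow> d j * f i \<le> f j"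
  shows "(\<Prod>i\<le>n. d i) \<le> A ^ Suc n * f n"
proof -
  define g where "g m = (if {i\<in>H. i < m} = {} then 1 else f (Max {i\<in>H. i < m}))" for m
  have g1: "1 \<le> g m" for m
    unfolding g_def using f(2) by simp
  have step: "d m * g m \<le> A * g (Suc m)" if "m \<le> n" for m
  proof (cases "m \<in> H")
    case True
    have ne: "{i\<in>H. i < Suc m} \<noteq> {}" and max: "Max {i\<in>H. i < Suc m} = m"
      using True by (auto intro!: Max_eqI)
    have gSuc: "g (Suc m) = f m" unfolding g_def by (simp only: if_not_P[OF ne] max)
    have "d m * g m \<le> f m"
    proof (cases "{i\<in>H. i < m} = {}")
      case True
      then show ?thesis using marked[OF that \<open>m \<in> H\<close>] unfolding g_def by simp
    next
      case False
      then have "Max {i\<in>H. i < m} \<in> {i\<in>H. i < m}" by (intro Max_in) auto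
      then show ?thesis using marked_pair[OF that _ \<open>m \<in> H\<close>]
        unfolding g_def if_not_P[OF False] by simp
    qed
    also have "\<dots> \<le> A * g (Suc m)" using gSuc A f(2)[of m] by simp
    finally show ?thesis .
  next
    case False
    then have "{i\<in>H. i < Suc m} = {i\<in>H. i < m}" using less_Suc_eq by auto
    then have "g (Suc m) = g m" unfolding g_def by (simp only:)
    then show ?thesis
      using unmarked[OF that False] g1[of m] by (simp add: mult_right_mono mult.commute)
  qed
  have prod_g: "(\<Prod>i<m. d i) \<le> A ^ m * g m" if "m \<le> Suc n" for m
    using that
  proof (induction m)
    case 0
    then show ?case by (simp add: g_def)
  next
    case (Suc m)
    have "(\<Prod>i<Suc m. d i) = (\<Prod>i<m. d i) * d m" by simp
    also have "\<dots> \<le> A ^ m * g m * d m"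
      using Suc d by (intro mult_right_mono) auto
    also have "\<dots> \<le> A ^ m * (A * g (Suc m))"
      using step[of m] Suc.prems A by (simp add: mult.assoc mult.commute[of "g m"] mult_left_mono)
    finally show ?case by (simp add: mult_ac)
  qed
  have "g (Suc n) \<le> f n"
  proof (cases "{i\<in>H. i < Suc n} = {}")
    case False
    then have "Max {i\<in>H. i < Suc n} \<le> n" by (subst Max_le_iff) auto
    then show ?thesis unfolding g_def if_not_P[OF False] using f(1) by (simp add: monoD)
  qed (simp add: g_def f(2))
  then have "A ^ Suc n * g (Suc n) \<le> A ^ Suc n * f n" using A by (simp add: mult_left_mono)
  with prod_g[of "Suc n"] show ?thesis by (simp add: lessThan_Suc_atMost)
qed

definition exp_separated :: "'v set \<Rightarrow> ('v \<Rightarrow> 'v \<Rightarrow> bool) \<Rightarrow> nat \<Rightarrow> real \<Rightarrow> bool" where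
  "exp_separated V E nstar c \<longleftrightarrow>
     (\<forall>v\<in>V. \<forall>w\<in>V. v \<noteq> w \<and> nstar < deg E v \<and> nstar < deg E w \<longrightarrow>
        real (deg E v) \<le> exp (c * real (gdist E w v)))"

lemma exp_separated_root_bound:
  assumes G: "graph_ok V E" and x: "x \<in> V" and c: "0 \<le> c" and sep: "exp_separated V E nstar c"
  obtains K where "0 \<le> K"
    and "\<And>v. v \<in> V \<Longrightarrow> nstar < deg E v \<Longrightarrow> real (deg E v) \<le> exp (K + c * real (gdist E x v))"
proof (cases "\<exists>w\<in>V. nstar < deg E w")
  case False
  then show ?thesis using that[of 0] by auto
next
  case True
  then obtain w where w: "w \<in> V" "nstar < deg E w" by blast
  define K where "K = ln (real (deg E w)) + c * real (gdist E w x)"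
  show ?thesis
  proof (rule that[of K])
    show "0 \<le> K" unfolding K_def using w(2) c by simp
    fix v assume v: "v \<in> V" "nstar < deg E v"
    show "real (deg E v) \<le> exp (K + c * real (gdist E x v))"
    proof (cases "v = w")
      case True
      then have "real (deg E v) = exp (ln (real (deg E w)))" using w(2) by simp
      also have "\<dots> \<le> exp (K + c * real (gdist E x v))" unfolding K_def using c by simp
      finally show ?thesis .
    next
      case False
      have "real (gdist E w v) \<le> real (gdist E w x) + real (gdist E x v)"
        using gdist_triangle[OF G w(1) x v(1)] by linarith
      then have "c * real (gdist E w v) \<le> c * (real (gdist E w x) + real (gdist E x v))"
        using c by (rule mult_left_mono)
      also have "\<dots> \<le> K + c * real (gdist E x v)"
        unfolding K_def using w(2) by (simp add: distrib_left)
      finally have "c * real (gdist E w v) \<le> K + c * real (gdist E x v)" .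
      then show ?thesis
        using sep v w False unfolding exp_separated_def by (meson exp_le_cancel_iff order.trans)
    qed
  qed
qed

lemma deg_mult_ancestor_deg_prod_le:
  assumes G: "graph_ok V E" and x: "x \<in> V" and ns: "1 \<le> nstar" and c: "0 \<le> c" and K: "0 \<le> K"
    and sep: "exp_separated V E nstar c"
    and root: "\<And>v. v \<in> V \<Longrightarrow> nstar < deg E v \<Longrightarrow> real (deg E v) \<le> exp (K + c * real (gdist E x v))"
    and y: "y \<in> sphere V E n x"
  shows "real (deg E y) * ancestor_deg_prod E x n y \<le> real nstar ^ Suc n * exp (K + c * real n)"
proof -
  define a where "a i = (bfs_parent E x ^^ (n - i)) y" for i
  have level: "a i \<in> sphere V E i x" if "i \<le> n" for i
    using bfs_ancestor[OF G x y, of "n - i"] that unfolding a_def by simp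
  have walk: "(E ^^ (j - i)) (a i) (a j)" if "i \<le> j" "j \<le> n" for i j
  proof -
    have "n - i = (j - i) + (n - j)" using that by simp
    then have "a i = (bfs_parent E x ^^ (j - i)) (a j)"
      unfolding a_def by (simp only: funpow_add comp_apply)
    then show ?thesis using bfs_ancestor[OF G x level[OF that(2)], of "j - i"] that by simp
  qed
  show ?thesis
    unfolding deg_mult_ancestor_deg_prod a_def[symmetric]
  proof (rule prod_le_power_mult_telescoping[where H = "{i. nstar < deg E (a i)}"])
    show "mono (\<lambda>i. exp (K + c * real i))" using c by (intro monoI) (simp add: mult_left_mono)
    show "1 \<le> exp (K + c * real i)" for i using c K by simp
    show "real (deg E (a i)) \<le> exp (K + c * real i)" if "i \<le> n" "i \<in> {i. nstar < deg E (a i)}" for i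
      using root[of "a i"] level[OF that(1)] that(2) unfolding sphere_def by auto
    show "real (deg E (a j)) * exp (K + c * real i) \<le> exp (K + c * real j)"
      if "j \<le> n" "i \<in> {i. nstar < deg E (a i)}" "j \<in> {i. nstar < deg E (a i)}" "i < j" for i j
    proof -
      have "a i \<noteq> a j" using level[of i] level[of j] that by (auto simp: sphere_def)
      then have "real (deg E (a j)) \<le> exp (c * real (gdist E (a i) (a j)))"
        using sep level that unfolding exp_separated_def sphere_def by auto
      also have "\<dots> \<le> exp (c * (real j - real i))"
        using gdist_le_walk[OF walk[of i j]] that c by (simp add: mult_left_mono)
      finally have "real (deg E (a j)) * exp (K + c * real i)
          \<le> exp (c * (real j - real i)) * exp (K + c * real i)"
        by (rule mult_right_mono) simp
      also have "\<dots> = exp (K + c * real j)" by (simp add: exp_add[symmetric] algebra_simps)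
      finally show ?thesis .
    qed
  qed (use ns in auto)
qed

lemma sum_powr_le_of_weighted_bound:
  fixes d p :: "'a \<Rightarrow> real"
  assumes S: "finite S" and kraft: "(\<Sum>y\<in>S. 1 / p y) \<le> 1"
    and p: "\<And>y. y \<in> S \<Longrightarrow> 1 \<le> p y" and d: "\<And>y. y \<in> S \<Longrightarrow> 0 \<le> d y"
    and B: "\<And>y. y \<in> S \<Longrightarrow> d y * p y \<le> B" and \<theta>: "0 \<le> \<theta>"
  shows "(\<Sum>y\<in>S. d y powr (1 + \<theta>)) \<le> B powr (1 + \<theta>)"
proof (cases "S = {}")
  case False
  have dB: "d y \<le> B" if "y \<in> S" for y
    using B[OF that] mult_left_mono[OF p[OF that] d[OF that]] by simp
  then have B0: "0 \<le> B" using False d by (meson all_not_in_conv order.trans)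
  have "d y \<le> B * (1 / p y)" if "y \<in> S" for y
    using B[OF that] p[OF that] by (simp add: field_simps)
  then have "(\<Sum>y\<in>S. d y) \<le> (\<Sum>y\<in>S. B * (1 / p y))"
    by (intro sum_mono)
  also have "\<dots> = B * (\<Sum>y\<in>S. 1 / p y)" by (rule sum_distrib_left[symmetric])
  also have "\<dots> \<le> B" using kraft B0 by (simp add: mult_left_le)
  finally have sum_d: "(\<Sum>y\<in>S. d y) \<le> B" .
  have "(\<Sum>y\<in>S. d y powr (1 + \<theta>)) \<le> (\<Sum>y\<in>S. d y * B powr \<theta>)"
    using d dB \<theta> by (intro sum_mono) (simp add: powr_add mult_left_mono powr_mono2)
  also have "\<dots> \<le> B * B powr \<theta>"
    using sum_d by (simp add: sum_distrib_right[symmetric] mult_right_mono)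
  finally show ?thesis using B0 by (simp add: powr_add)
qed simp

lemma sphere_deg_powr_sum_le:
  assumes G: "graph_ok V E" and x: "x \<in> V" and ns: "1 \<le> nstar" and c: "0 \<le> c"
    and sep: "exp_separated V E nstar c" and \<theta>: "0 \<le> \<theta>"
  obtains K where "\<And>N. (\<Sum>y\<in>sphere V E N x. real (deg E y) powr (1 + \<theta>))
      \<le> (real nstar ^ Suc N * exp (K + c * real N)) powr (1 + \<theta>)"
proof -
  obtain K where K: "0 \<le> K"
    and root: "\<And>v. v \<in> V \<Longrightarrow> nstar < deg E v \<Longrightarrow> real (deg E v) \<le> exp (K + c * real (gdist E x v))"
    using exp_separated_root_bound[OF G x c sep] by blast
  show ?thesis
  proof (rule that)
    fix N
    show "(\<Sum>y\<in>sphere V E N x. real (deg E y) powr (1 + \<theta>))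
        \<le> (real nstar ^ Suc N * exp (K + c * real N)) powr (1 + \<theta>)"
      using finite_sphere[OF G x] sum_inverse_ancestor_deg_prod_le_1[OF G x]
        ancestor_deg_prod_ge_1[OF G x] deg_mult_ancestor_deg_prod_le[OF G x ns c K sep root] \<theta>
      by (intro sum_powr_le_of_weighted_bound[where p = "ancestor_deg_prod E x N"]) auto
  qed
qed

lemma power_mult_exp_powr_le_exp:
  fixes A K c \<theta> :: real
  assumes A: "1 \<le> A" and \<theta>: "0 \<le> \<theta>" and N: "ln A + K \<le> real N"
  shows "(A ^ Suc N * exp (K + c * real N)) powr (1 + \<theta>) \<le> exp ((1 + \<theta>) * (ln A + c + 1) * real N)"
proof -
  have "ln (A ^ Suc N * exp (K + c * real N)) = real N * ln A + c * real N + (ln A + K)"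
    using A by (simp add: ln_mult ln_realpow algebra_simps)
  also have "\<dots> \<le> (ln A + c + 1) * real N" using N by (simp add: algebra_simps)
  finally have "(1 + \<theta>) * ln (A ^ Suc N * exp (K + c * real N)) \<le> (1 + \<theta>) * (ln A + c + 1) * real N"
    using \<theta> by (simp add: mult_left_mono mult.assoc)
  then show ?thesis using A by (simp add: powr_def)
qed

lemma sphere_deg_powr_sum_le_exp:
  assumes G: "graph_ok V E" and x: "x \<in> V" and ns: "1 \<le> nstar" and c: "0 \<le> c"
    and sep: "exp_separated V E nstar c" and \<theta>: "0 \<le> \<theta>"
  shows "\<exists>Nx. \<forall>N\<ge>Nx. (\<Sum>y\<in>sphere V E N x. real (deg E y) powr (1 + \<theta>))
    \<le> exp ((1 + \<theta>) * (ln (real nstar) + c + 1) * real N)"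
proof -
  obtain K where bound: "\<And>N. (\<Sum>y\<in>sphere V E N x. real (deg E y) powr (1 + \<theta>))
      \<le> (real nstar ^ Suc N * exp (K + c * real N)) powr (1 + \<theta>)"
    using sphere_deg_powr_sum_le[OF G x ns c sep \<theta>] by blast
  have "(\<Sum>y\<in>sphere V E N x. real (deg E y) powr (1 + \<theta>))
      \<le> exp ((1 + \<theta>) * (ln (real nstar) + c + 1) * real N)"
    if "nat \<lceil>ln (real nstar) + K\<rceil> \<le> N" for N
    using that ns \<theta> by (intro order.trans[OF bound power_mult_exp_powr_le_exp]) auto
  then show ?thesis by blast
qed

lemma in_family_exp_separated:
  assumes F: "in_family V E nstar \<phi>" and \<kappa>: "0 < \<kappa>"
    and \<phi>: "\<And>b. real nstar + 1 \<le> b \<Longrightarrow> \<kappa> * ln b \<le> \<phi> b"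
  shows "exp_separated V E nstar (1 / \<kappa>)"
  unfolding exp_separated_def
proof (intro ballI impI)
  fix v w assume v: "v \<in> V" and w: "w \<in> V" and vw: "v \<noteq> w \<and> nstar < deg E v \<and> nstar < deg E w"
  define b where "b = real (max (deg E w) (deg E v))"
  have b: "real nstar + 1 \<le> b" "real (deg E v) \<le> b" unfolding b_def using vw by auto
  have "\<kappa> * ln b \<le> real (gdist E w v)"
    using \<phi>[OF b(1)] F v w vw unfolding in_family_def b_def by fastforce
  moreover have "\<kappa> * ln (real (deg E v)) \<le> \<kappa> * ln b" using b vw \<kappa> by (intro mult_left_mono) auto
  ultimately have "\<kappa> * ln (real (deg E v)) \<le> real (gdist E w v)" by linarith
  then have "ln (real (deg E v)) \<le> 1 / \<kappa> * real (gdist E w v)"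
    using \<kappa> by (simp add: field_simps)
  then show "real (deg E v) \<le> exp (1 / \<kappa> * real (gdist E w v))"
    using vw by (metis exp_le_cancel_iff exp_ln of_nat_0_less_iff order_le_less_trans zero_le)
qed

lemma ln_ln_powr_mult_ln_mono:
  fixes a b \<upsilon> p :: real
  assumes a: "exp 1 \<le> a" and ab: "a \<le> b" and \<upsilon>: "0 \<le> \<upsilon>" and p: "0 \<le> p"
  shows "\<upsilon> * ln (ln a) powr p * ln b \<le> \<upsilon> * ln b * ln (ln b) powr p"
proof -
  have "1 \<le> ln a" using a by (metis exp_gt_zero ln_exp ln_le_cancel_iff order_less_le_trans)
  moreover have "ln a \<le> ln b" using ab a by (smt (verit) exp_gt_zero ln_le_cancel_iff)
  ultimately have "ln (ln a) powr p \<le> ln (ln b) powr p" using p by (intro powr_mono2) auto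
  moreover have "0 \<le> \<upsilon> * ln b" using \<open>1 \<le> ln a\<close> \<open>ln a \<le> ln b\<close> \<upsilon> by simp
  ultimately show ?thesis by (metis mult.assoc mult.commute mult_left_mono)
qed

theorem lemma5p4:
  fixes nstar :: nat and \<upsilon> \<epsilon> :: real
  assumes "nstar > 2" and "\<upsilon> > 0" and "\<epsilon> > 0"
    and "\<upsilon> * ln (real nstar + 1) * (ln (ln (real nstar + 1))) powr (1 + \<epsilon>) > 1"
  shows "\<forall>\<theta>>0. \<exists>a>0. \<forall>(V :: nat set) E.
           in_family V E nstar (\<lambda>b. \<upsilon> * ln b * (ln (ln b)) powr (1 + \<epsilon>)) \<longrightarrow>
           (\<forall>x\<in>V. \<exists>Nx. \<forall>N\<ge>Nx.
              (\<Sum>y\<in>sphere V E N x. real (deg E y) powr (1 + \<theta>)) \<le> exp (a * real N))"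
proof (intro allI impI)
  fix \<theta> :: real assume \<theta>: "\<theta> > 0"
  define \<kappa> where "\<kappa> = \<upsilon> * ln (ln (real nstar + 1)) powr (1 + \<epsilon>)"
  have e: "exp 1 < real nstar + 1" using exp_le \<open>nstar > 2\<close> by linarith
  then have "0 < ln (ln (real nstar + 1))" by (smt (verit) exp_gt_zero ln_exp ln_gt_zero ln_less_cancel_iff)
  then have \<kappa>: "0 < \<kappa>" unfolding \<kappa>_def using \<open>\<upsilon> > 0\<close> by simp
  have sep: "exp_separated V E nstar (1 / \<kappa>)"
    if "in_family V E nstar (\<lambda>b. \<upsilon> * ln b * (ln (ln b)) powr (1 + \<epsilon>))" for V :: "nat set" and E
    using in_family_exp_separated[OF that \<kappa>] ln_ln_powr_mult_ln_mono[of "real nstar + 1"] e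
      \<open>\<upsilon> > 0\<close> \<open>\<epsilon> > 0\<close> unfolding \<kappa>_def by simp
  have ns: "1 \<le> nstar" using \<open>nstar > 2\<close> by simp
  have "\<exists>Nx. \<forall>N\<ge>Nx. (\<Sum>y\<in>sphere V E N x. real (deg E y) powr (1 + \<theta>))
      \<le> exp ((1 + \<theta>) * (ln (real nstar) + 1 / \<kappa> + 1) * real N)"
    if F: "in_family V E nstar (\<lambda>b. \<upsilon> * ln b * (ln (ln b)) powr (1 + \<epsilon>))" and "x \<in> V"
    for V :: "nat set" and E x
    using sphere_deg_powr_sum_le_exp[OF _ that(2) ns _ sep[OF F]] F \<theta> \<kappa> unfolding in_family_def by simp
  moreover have "0 < (1 + \<theta>) * (ln (real nstar) + 1 / \<kappa> + 1)" using \<theta> \<kappa> ns by (simp add: add_nonneg_pos)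
  ultimately show "\<exists>a>0. \<forall>(V :: nat set) E.
      in_family V E nstar (\<lambda>b. \<upsilon> * ln b * (ln (ln b)) powr (1 + \<epsilon>)) \<longrightarrow>
      (\<forall>x\<in>V. \<exists>Nx. \<forall>N\<ge>Nx. (\<Sum>y\<in>sphere V E N x. real (deg E y) powr (1 + \<theta>)) \<le> exp (a * real N))"
    by blast
qed

end
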